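(* Consider, for $x> 0$, the planar piecewise-smooth system $$\dot x=1,\qquad \dot y=-ay-\sin\!\left[\pi x\left(1+\tfrac12\lambda\right)\right],$$ with $a>0$, where $\lambda=\operatorname{sign}(y)$ for $y\neq0$ and $\lambda\in(-1,1)$ for $y=0$. Then its sliding manifold is $$\Lambda^{N}=\left\{(x,0)\in\mathbb{R}^2:\ x\in\left(\tfrac{2n}{3},\,2n\right),\ n\in\mathbb{N}\setminus\{0\}\right\}.$$
   Context: The sliding manifold is the set of points $(x,0)$ on the switching line $y=0$ for which there exists $\lambda\in(-1,1)$ with $\sin\!\left[\pi x\left(1+\tfrac12\lambda\right)\right]=0$, i.e. points where a motion $y\equiv0$, $\dot x=1$ along the switching line is possible. *)

theory Defs
  imports Complex_Main
begin

definition pws_field :: "real \<Rightarrow> real \<Rightarrow> real \<Rightarrow> real \<Rightarrow> real \<times> real" where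
  "pws_field a x y lam = (1, - a * y - sin (pi * x * (1 + lam / 2)))"

text \<open>Sliding manifold: points (x,0) of the switching line (in the domain x > 0) for which
  some lambda in (-1,1) makes the y-component of the field vanish, so that the motion
  y = 0, x' = 1 along the switching line is possible.\<close>
definition sliding_manifold :: "real \<Rightarrow> (real \<times> real) set" where
  "sliding_manifold a = {(x, 0) | x. x > 0 \<and>
      (\<exists>lam. -1 < lam \<and> lam < 1 \<and> snd (pws_field a x 0 lam) = 0)}"

end

theory Submission
  imports Defs
begin

text \<open>On the switching line the vector field is horizontal iff \<open>x (1 + \<lambda>/2)\<close> is an integer.
  As \<open>\<lambda>\<close> ranges over \<open>(-1, 1)\<close> this quantity sweeps out the interval \<open>(x/2, 3x/2)\<close>,
  and a positive integer \<open>n\<close> lies in that interval iff \<open>2n/3 < x < 2n\<close>.\<close>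

lemma switching_scale_range_iff:
  fixes x t :: real
  assumes "x > 0"
  shows "(\<exists>lam. -1 < lam \<and> lam < 1 \<and> x * (1 + lam / 2) = t) \<longleftrightarrow> x / 2 < t \<and> t < 3 * x / 2"
proof
  assume "\<exists>lam. -1 < lam \<and> lam < 1 \<and> x * (1 + lam / 2) = t"
  then obtain lam where lam: "-1 < lam" "lam < 1" and t: "t = x * (1 + lam / 2)" by auto
  have "t - x / 2 = x * (1 + lam) / 2" "3 * x / 2 - t = x * (1 - lam) / 2"
    unfolding t by (simp_all add: algebra_simps)
  moreover have "x * (1 + lam) > 0" "x * (1 - lam) > 0"
    using assms lam by simp_all
  ultimately show "x / 2 < t \<and> t < 3 * x / 2" by linarith
next
  assume "x / 2 < t \<and> t < 3 * x / 2"
  with assms show "\<exists>lam. -1 < lam \<and> lam < 1 \<and> x * (1 + lam / 2) = t"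
    by (intro exI[of _ "2 * (t / x - 1)"]) (auto simp: field_simps)
qed

lemma Ints_between_half_and_three_halves_iff:
  fixes x :: real
  assumes "x > 0"
  shows "(\<exists>t \<in> \<int>. x / 2 < t \<and> t < 3 * x / 2) \<longleftrightarrow>
    (\<exists>n::nat. n \<noteq> 0 \<and> 2 * real n / 3 < x \<and> x < 2 * real n)"
proof
  assume "\<exists>t \<in> \<int>. x / 2 < t \<and> t < 3 * x / 2"
  then obtain i :: int where i: "x / 2 < i" "i < 3 * x / 2" by (auto elim: Ints_cases)
  with assms have "i > 0" by linarith
  then have "real (nat i) = of_int i" by simp
  with i \<open>i > 0\<close> show "\<exists>n::nat. n \<noteq> 0 \<and> 2 * real n / 3 < x \<and> x < 2 * real n"
    by (intro exI[of _ "nat i"]) auto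
next
  assume "\<exists>n::nat. n \<noteq> 0 \<and> 2 * real n / 3 < x \<and> x < 2 * real n"
  then obtain n :: nat where "2 * real n / 3 < x" "x < 2 * real n" by blast
  then show "\<exists>t \<in> \<int>. x / 2 < t \<and> t < 3 * x / 2"
    by (intro bexI[of _ "real n"]) auto
qed

lemma sliding_condition_iff:
  fixes x :: real
  assumes "x > 0"
  shows "(\<exists>lam. -1 < lam \<and> lam < 1 \<and> sin (pi * x * (1 + lam / 2)) = 0) \<longleftrightarrow>
    (\<exists>n::nat. n \<noteq> 0 \<and> 2 * real n / 3 < x \<and> x < 2 * real n)"
proof -
  have "sin (pi * x * (1 + lam / 2)) = 0 \<longleftrightarrow> x * (1 + lam / 2) \<in> \<int>" for lam
    using sin_times_pi_eq_0[of "x * (1 + lam / 2)"] by (simp add: ac_simps)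
  then have "(\<exists>lam. -1 < lam \<and> lam < 1 \<and> sin (pi * x * (1 + lam / 2)) = 0) \<longleftrightarrow>
      (\<exists>t \<in> \<int>. \<exists>lam. -1 < lam \<and> lam < 1 \<and> x * (1 + lam / 2) = t)"
    by auto
  also have "\<dots> \<longleftrightarrow> (\<exists>t \<in> \<int>. x / 2 < t \<and> t < 3 * x / 2)"
    using switching_scale_range_iff[OF assms] by simp
  finally show ?thesis
    using Ints_between_half_and_three_halves_iff[OF assms] by simp
qed

theorem proposition2:
  fixes a :: real
  assumes "a > 0"
  shows "sliding_manifold a =
    {(x, 0) | x. \<exists>n::nat. n \<noteq> 0 \<and> 2 * real n / 3 < x \<and> x < 2 * real n}"
proof -
  have "x > 0 \<and> (\<exists>lam. -1 < lam \<and> lam < 1 \<and> snd (pws_field a x 0 lam) = 0) \<longleftrightarrow>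
      (\<exists>n::nat. n \<noteq> 0 \<and> 2 * real n / 3 < x \<and> x < 2 * real n)" for x :: real
  proof (cases "x > 0")
    case True
    then show ?thesis by (simp add: pws_field_def sliding_condition_iff)
  next
    case False
    then show ?thesis by (auto intro: order.strict_trans2[of _ "2 * real _ / 3"])
  qed
  then show ?thesis
    unfolding sliding_manifold_def by blast
qed

end
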